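(* Let $G\neq K_n$ be a simple graph with $n$ vertices and maximum degree $\Delta$. (i) If $0\leq \alpha< \frac{1}{\Delta+1}$, then $S_k(A_{\alpha}(G))\leq \frac{(1-\alpha)n}{2}(1+\sqrt{k})$ for every $2\leq k\leq n$. (ii) If $\frac{1}{\Delta+1}\leq \alpha< 1$, then $S_k(A_{\alpha}(G))\leq \frac{\alpha \Delta n}{2}(1+\sqrt{k})$ for every $2\leq k\leq n$.
   Context: All graphs are simple and undirected. For a graph $G$ with adjacency matrix $A(G)$ and diagonal degree matrix $D(G)$, and a real $\alpha\in[0,1]$, $A_{\alpha}(G)=\alpha D(G)+(1-\alpha)A(G)$. For a real symmetric $n\times n$ matrix $M$ with eigenvalues $\lambda_1(M)\geq\cdots\geq\lambda_n(M)$, $S_k(M)=\sum_{i=1}^k\lambda_i(M)$. $K_n$ is the complete graph on $n$ vertices. *)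

theory Defs
  imports "Jordan_Normal_Form.Char_Poly" "HOL-Computational_Algebra.Polynomial"
begin

definition simple_graph :: "nat \<Rightarrow> (nat \<Rightarrow> nat \<Rightarrow> bool) \<Rightarrow> bool" where
  "simple_graph n E \<longleftrightarrow> (\<forall>i j. E i j \<longrightarrow> i < n \<and> j < n) \<and>
     (\<forall>i. \<not> E i i) \<and> (\<forall>i j. E i j \<longrightarrow> E j i)"

definition is_complete_graph :: "nat \<Rightarrow> (nat \<Rightarrow> nat \<Rightarrow> bool) \<Rightarrow> bool" where
  "is_complete_graph n E \<longleftrightarrow> (\<forall>i<n. \<forall>j<n. i \<noteq> j \<longrightarrow> E i j)"

definition degree :: "nat \<Rightarrow> (nat \<Rightarrow> nat \<Rightarrow> bool) \<Rightarrow> nat \<Rightarrow> nat" where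
  "degree n E i = card {j. j < n \<and> E i j}"

definition max_degree :: "nat \<Rightarrow> (nat \<Rightarrow> nat \<Rightarrow> bool) \<Rightarrow> nat" where
  "max_degree n E = Max (insert 0 ((\<lambda>i. degree n E i) ` {0..<n}))"

definition adj_matrix :: "nat \<Rightarrow> (nat \<Rightarrow> nat \<Rightarrow> bool) \<Rightarrow> real mat" where
  "adj_matrix n E = mat n n (\<lambda>(i, j). if E i j then 1 else 0)"

definition deg_matrix :: "nat \<Rightarrow> (nat \<Rightarrow> nat \<Rightarrow> bool) \<Rightarrow> real mat" where
  "deg_matrix n E = mat n n (\<lambda>(i, j). if i = j then real (degree n E i) else 0)"

definition A_alpha :: "real \<Rightarrow> nat \<Rightarrow> (nat \<Rightarrow> nat \<Rightarrow> bool) \<Rightarrow> real mat" where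
  "A_alpha \<alpha> n E = \<alpha> \<cdot>\<^sub>m deg_matrix n E + (1 - \<alpha>) \<cdot>\<^sub>m adj_matrix n E"

text \<open>For a real
  symmetric matrix the characteristic polynomial splits over the reals, so this
  list has length equal to the dimension.\<close>

definition real_roots_mset :: "real poly \<Rightarrow> real multiset" where
  "real_roots_mset p = (\<Sum>x\<in>{x. poly p x = 0}. replicate_mset (order x p) x)"

definition eigenvalues_desc :: "real mat \<Rightarrow> real list" where
  "eigenvalues_desc M = rev (sorted_list_of_multiset (real_roots_mset (char_poly M)))"

definition Sk :: "nat \<Rightarrow> real mat \<Rightarrow> real" where
  "Sk k M = (\<Sum>i<k. eigenvalues_desc M ! i)"

end

theory Submission
  imports
    Defs
    "Jordan_Normal_Form.Schur_Decomposition"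
    "HOL-Combinatorics.List_Permutation"
    "HOL-Analysis.L2_Norm"
begin

(* Every entry of A_alpha(G) lies in [0, 2c] with 2c = max (alpha Delta) (1 - alpha), which is
   1 - alpha in case (i) and alpha Delta in case (ii). Write A_alpha(G) = c J + N with J the
   all-ones matrix, so that every entry of N lies in [-c, c]. For an orthonormal eigenbasis
   u_1, ..., u_n with eigenvalues mu_i one has mu_i = c (u_i . 1)^2 + u_i . N u_i. Summed over the
   indices of the k largest eigenvalues, the first terms contribute at most c |1|^2 = c n by
   Bessel's inequality, and by Cauchy-Schwarz the second ones at most
   sqrt k (sum_i |N u_i|^2)^(1/2) = sqrt k |N|_F <= sqrt k n c. *)

lemma index_mult_mat_vec_sum:
  assumes "M \<in> carrier_mat n m" "v \<in> carrier_vec m" "i < n"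
  shows "(M *\<^sub>v v) $ i = (\<Sum>j<m. M $$ (i, j) * v $ j)"
  using assms by (auto simp: scalar_prod_def lessThan_atLeast0 intro!: sum.cong)

lemma scalar_prod_sum:
  assumes "x \<in> carrier_vec n" "y \<in> carrier_vec n"
  shows "x \<bullet> y = (\<Sum>r<n. x $ r * y $ r)"
  using assms by (auto simp: scalar_prod_def lessThan_atLeast0)

lemma real_scalar_prod_self_nonneg: "0 \<le> (x :: real vec) \<bullet> x"
  unfolding scalar_prod_def by (auto intro!: sum_nonneg)

lemma sum_le_sqrt_card_mult_sqrt_sum_squares:
  fixes f :: "'a \<Rightarrow> real"
  shows "(\<Sum>i\<in>I. f i) \<le> sqrt (card I) * sqrt (\<Sum>i\<in>I. (f i)\<^sup>2)"
proof -
  have "(\<Sum>i\<in>I. f i) \<le> (\<Sum>i\<in>I. \<bar>1\<bar> * \<bar>f i\<bar>)"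
    by (intro sum_mono) auto
  also have "\<dots> \<le> L2_set (\<lambda>_. 1) I * L2_set f I"
    by (rule L2_set_mult_ineq)
  finally show ?thesis
    by (simp add: L2_set_constant L2_set_def)
qed

lemma real_scalar_prod_square_le:
  fixes x y :: "real vec"
  assumes x: "x \<in> carrier_vec n" and y: "y \<in> carrier_vec n"
  shows "(x \<bullet> y)\<^sup>2 \<le> (x \<bullet> x) * (y \<bullet> y)"
proof -
  have "\<bar>x \<bullet> y\<bar> \<le> (\<Sum>r<n. \<bar>x $ r\<bar> * \<bar>y $ r\<bar>)"
    unfolding scalar_prod_sum[OF x y] by (rule order_trans[OF sum_abs]) (simp add: abs_mult)
  also have "\<dots> \<le> L2_set (($) x) {..<n} * L2_set (($) y) {..<n}"
    by (rule L2_set_mult_ineq)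
  also have "\<dots> = sqrt (x \<bullet> x) * sqrt (y \<bullet> y)"
    by (simp add: L2_set_def scalar_prod_sum[OF x x] scalar_prod_sum[OF y y] power2_eq_square)
  finally have "\<bar>x \<bullet> y\<bar>\<^sup>2 \<le> (sqrt (x \<bullet> x) * sqrt (y \<bullet> y))\<^sup>2"
    by (intro power_mono) auto
  then show ?thesis
    by (simp add: power_mult_distrib real_scalar_prod_self_nonneg)
qed

section \<open>Orthonormal lists of vectors\<close>

definition orthonormal_vecs :: "nat \<Rightarrow> real vec list \<Rightarrow> bool" where
  "orthonormal_vecs n ws \<longleftrightarrow> set ws \<subseteq> carrier_vec n \<and>
     (\<forall>i<length ws. \<forall>j<length ws. ws ! i \<bullet> ws ! j = (if i = j then 1 else 0))"

definition orthonormal_basis :: "nat \<Rightarrow> real vec list \<Rightarrow> bool" where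
  "orthonormal_basis n ws \<longleftrightarrow> orthonormal_vecs n ws \<and> length ws = n"

lemma orthonormal_vecs_Cons:
  "orthonormal_vecs n (v # ws) \<longleftrightarrow>
     v \<in> carrier_vec n \<and> v \<bullet> v = 1 \<and> (\<forall>w\<in>set ws. v \<bullet> w = 0) \<and> orthonormal_vecs n ws"
proof -
  have comm: "ws ! i \<bullet> v = v \<bullet> ws ! i"
    if "v \<in> carrier_vec n" "set ws \<subseteq> carrier_vec n" "i < length ws" for i
    using that by (metis comm_scalar_prod nth_mem subsetD)
  show ?thesis
    unfolding orthonormal_vecs_def length_Cons All_less_Suc2
    by (auto simp: in_set_conv_nth comm) (metis nth_mem)+
qed

lemma orthonormal_vecs_mat_of_cols:
  assumes ws: "orthonormal_vecs n ws"
  shows "(mat_of_cols n ws)\<^sup>T * mat_of_cols n ws = 1\<^sub>m (length ws)"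
proof (rule eq_matI)
  fix i j assume "i < dim_row (1\<^sub>m (length ws))" "j < dim_col (1\<^sub>m (length ws))"
  then have i: "i < length ws" and j: "j < length ws" by auto
  have "ws ! i \<in> carrier_vec n" "ws ! j \<in> carrier_vec n"
    using ws i j nth_mem by (auto simp: orthonormal_vecs_def)
  then show "((mat_of_cols n ws)\<^sup>T * mat_of_cols n ws) $$ (i, j) = 1\<^sub>m (length ws) $$ (i, j)"
    using ws i j by (simp add: orthonormal_vecs_def)
qed auto

lemma orthonormal_vecs_transpose_mult_mult_vec:
  assumes ws: "orthonormal_vecs n ws" and y: "y \<in> carrier_vec (length ws)"
  shows "(mat_of_cols n ws)\<^sup>T *\<^sub>v (mat_of_cols n ws *\<^sub>v y) = y"
proof -
  have "(mat_of_cols n ws)\<^sup>T *\<^sub>v (mat_of_cols n ws *\<^sub>v y) = ((mat_of_cols n ws)\<^sup>T * mat_of_cols n ws) *\<^sub>v y"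
    using y by (intro assoc_mult_mat_vec[symmetric, of _ "length ws" n]) auto
  then show ?thesis
    using orthonormal_vecs_mat_of_cols[OF ws] y by simp
qed

lemma orthonormal_basis_mat_of_cols:
  assumes "orthonormal_basis n ws"
  shows "mat_of_cols n ws \<in> carrier_mat n n"
    and "mat_of_cols n ws * (mat_of_cols n ws)\<^sup>T = 1\<^sub>m n"
proof -
  have len: "length ws = n" and ws: "orthonormal_vecs n ws"
    using assms by (auto simp: orthonormal_basis_def)
  show U: "mat_of_cols n ws \<in> carrier_mat n n"
    using mat_of_cols_carrier(1)[of n ws] len by simp
  have "(mat_of_cols n ws)\<^sup>T * mat_of_cols n ws = 1\<^sub>m n"
    using orthonormal_vecs_mat_of_cols[OF ws] len by simp
  then show "mat_of_cols n ws * (mat_of_cols n ws)\<^sup>T = 1\<^sub>m n"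
    using mat_mult_left_right_inverse[OF transpose_carrier_mat[THEN iffD2, OF U] U] by blast
qed

lemma index_transpose_mat_of_cols_mult_vec:
  assumes "set ws \<subseteq> carrier_vec n" "j < length ws"
  shows "((mat_of_cols n ws)\<^sup>T *\<^sub>v x) $ j = ws ! j \<bullet> x"
proof -
  have "ws ! j \<in> carrier_vec n"
    using assms nth_mem by blast
  then show ?thesis
    using assms by simp
qed

lemma orthonormal_basis_parseval:
  assumes ws: "orthonormal_basis n ws" and x: "x \<in> carrier_vec n"
  shows "(\<Sum>j<n. (ws ! j \<bullet> x)\<^sup>2) = x \<bullet> x"
proof -
  define U where "U = mat_of_cols n ws"
  have U: "U \<in> carrier_mat n n"
    using orthonormal_basis_mat_of_cols(1)[OF ws] by (simp add: U_def)
  have coord: "(U\<^sup>T *\<^sub>v x) $ j = ws ! j \<bullet> x" if "j < n" for j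
    using index_transpose_mat_of_cols_mult_vec[of ws n j] ws that
    by (simp add: U_def orthonormal_basis_def orthonormal_vecs_def)
  have "(\<Sum>j<n. (ws ! j \<bullet> x)\<^sup>2) = (\<Sum>j<n. (U\<^sup>T *\<^sub>v x) $ j * (U\<^sup>T *\<^sub>v x) $ j)"
    by (simp add: coord power2_eq_square)
  also have "\<dots> = (U\<^sup>T *\<^sub>v x) \<bullet> (U\<^sup>T *\<^sub>v x)"
    using U x by (intro scalar_prod_sum[symmetric] mult_mat_vec_carrier[of _ n n]) auto
  also have "\<dots> = x \<bullet> (U *\<^sub>v (U\<^sup>T *\<^sub>v x))"
    using U x by (intro transpose_vec_mult_scalar) auto
  also have "U *\<^sub>v (U\<^sup>T *\<^sub>v x) = (U * U\<^sup>T) *\<^sub>v x"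
    using U x by simp
  also have "\<dots> = x"
    using orthonormal_basis_mat_of_cols(2)[OF ws] x by (simp add: U_def)
  finally show ?thesis .
qed

lemma orthonormal_basis_bessel:
  assumes ws: "orthonormal_basis n ws" and x: "x \<in> carrier_vec n" and I: "I \<subseteq> {..<n}"
  shows "(\<Sum>j\<in>I. (ws ! j \<bullet> x)\<^sup>2) \<le> x \<bullet> x"
proof -
  have "(\<Sum>j\<in>I. (ws ! j \<bullet> x)\<^sup>2) \<le> (\<Sum>j<n. (ws ! j \<bullet> x)\<^sup>2)"
    using I by (intro sum_mono2) auto
  then show ?thesis
    using orthonormal_basis_parseval[OF ws x] by simp
qed

lemma orthonormal_vecs_normalize:
  fixes gs :: "real vec list"
  assumes gs: "set gs \<subseteq> carrier_vec n" and orth: "corthogonal gs"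
  shows "orthonormal_vecs n (map (\<lambda>w. (1 / sqrt (w \<bullet> w)) \<cdot>\<^sub>v w) gs)"
proof -
  let ?us = "map (\<lambda>w. (1 / sqrt (w \<bullet> w)) \<cdot>\<^sub>v w) gs"
  have "?us ! i \<bullet> ?us ! j = (if i = j then 1 else 0)" if i: "i < length gs" and j: "j < length gs" for i j
  proof -
    have gs_orth: "gs ! i \<bullet> gs ! j = 0 \<longleftrightarrow> i \<noteq> j"
      using corthogonalD[OF orth i j] by simp
    have gs_pos: "gs ! i \<bullet> gs ! i > 0"
      using corthogonalD[OF orth i i] real_scalar_prod_self_nonneg[of "gs ! i"] by simp
    have "gs ! i \<in> carrier_vec n" "gs ! j \<in> carrier_vec n"
      using gs i j nth_mem by blast+
    then have "?us ! i \<bullet> ?us ! j = (gs ! i \<bullet> gs ! j) / (sqrt (gs ! i \<bullet> gs ! i) * sqrt (gs ! j \<bullet> gs ! j))"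
      using i j by simp
    then show ?thesis
      using gs_orth gs_pos by auto
  qed
  then show ?thesis
    using gs by (auto simp: orthonormal_vecs_def)
qed

lemma orthonormal_basis_extension:
  assumes v: "v \<in> carrier_vec n" and vv: "v \<bullet> v = 1"
  obtains ws where "orthonormal_basis n (v # ws)"
proof -
  interpret cof_vec_space n "TYPE(real)" .
  have v0: "v \<noteq> 0\<^sub>v n"
    using vv v by auto
  define b where "b = basis_completion v"
  from basis_completion[OF v v0, folded b_def]
  have b: "set b \<subseteq> carrier_vec n" "distinct b" "\<not> lin_dep (set b)" "hd b = v" "length b = n"
    by auto
  have "n \<noteq> 0"
    using v vv by (cases n) (auto simp: scalar_prod_def)
  with b obtain vs where b_Cons: "b = v # vs"
    by (cases b) auto
  define gs where "gs = gram_schmidt n b"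
  from gram_schmidt_result[OF b(1-3) gs_def]
  have gs: "set gs \<subseteq> carrier_vec n" "corthogonal gs" "length gs = n"
    by (auto simp: b(5))
  have gs0: "gs ! 0 = v"
    using gram_schmidt_hd[OF v, of vs] gs(3) \<open>n \<noteq> 0\<close> unfolding gs_def b_Cons
    by (cases "gram_schmidt n (v # vs)") auto
  define us where "us = map (\<lambda>w. (1 / sqrt (w \<bullet> w)) \<cdot>\<^sub>v w) gs"
  have "orthonormal_basis n us"
    using orthonormal_vecs_normalize[OF gs(1,2)] gs(3) by (simp add: orthonormal_basis_def us_def)
  moreover have "us = v # tl us"
    using gs0 gs(3) \<open>n \<noteq> 0\<close> vv by (cases us) (auto simp: us_def nth_Cons' split: if_splits)
  ultimately show thesis
    using that by metis
qed

lemma orthonormal_basis_coordinates_eq: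
  assumes ws: "orthonormal_basis n ws" and x: "x \<in> carrier_vec n" and y: "y \<in> carrier_vec n"
    and coord: "\<And>j. j < n \<Longrightarrow> ws ! j \<bullet> x = ws ! j \<bullet> y"
  shows "x = y"
proof -
  define U where "U = mat_of_cols n ws"
  have U: "U \<in> carrier_mat n n" and UUT: "U * U\<^sup>T = 1\<^sub>m n"
    using orthonormal_basis_mat_of_cols[OF ws] by (simp_all add: U_def)
  have ws_carrier: "set ws \<subseteq> carrier_vec n" and len: "length ws = n"
    using ws by (auto simp: orthonormal_basis_def orthonormal_vecs_def)
  have "U\<^sup>T *\<^sub>v x = U\<^sup>T *\<^sub>v y"
  proof (rule eq_vecI)
    fix j assume "j < dim_vec (U\<^sup>T *\<^sub>v y)"
    then have j: "j < length ws"
      using U len by simp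
    show "(U\<^sup>T *\<^sub>v x) $ j = (U\<^sup>T *\<^sub>v y) $ j"
      unfolding U_def index_transpose_mat_of_cols_mult_vec[OF ws_carrier j] using coord j len by simp
  qed simp
  then have "(U * U\<^sup>T) *\<^sub>v x = (U * U\<^sup>T) *\<^sub>v y"
    using U x y by simp
  then show ?thesis
    using UUT x y by simp
qed

lemma scalar_prod_mat_of_cols_mult_vec_eq_0:
  fixes v :: "'a :: comm_semiring_0 vec"
  assumes v: "v \<in> carrier_vec n" and ws: "set ws \<subseteq> carrier_vec n" and orth: "\<forall>w\<in>set ws. v \<bullet> w = 0"
    and y: "y \<in> carrier_vec (length ws)"
  shows "v \<bullet> (mat_of_cols n ws *\<^sub>v y) = 0"
proof -
  have "(mat_of_cols n ws)\<^sup>T *\<^sub>v v = 0\<^sub>v (length ws)"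
  proof (rule eq_vecI)
    fix j assume "j < dim_vec (0\<^sub>v (length ws) :: 'a vec)"
    then have j: "j < length ws" by simp
    have "ws ! j \<bullet> v = v \<bullet> ws ! j"
      using ws v nth_mem[OF j] comm_scalar_prod[of "ws ! j" n v] by auto
    then show "((mat_of_cols n ws)\<^sup>T *\<^sub>v v) $ j = 0\<^sub>v (length ws) $ j"
      unfolding index_transpose_mat_of_cols_mult_vec[OF ws j] using orth j nth_mem[OF j] by simp
  qed simp
  moreover have "((mat_of_cols n ws)\<^sup>T *\<^sub>v v) \<bullet> y = v \<bullet> (mat_of_cols n ws *\<^sub>v y)"
    using v y by (intro transpose_vec_mult_scalar) auto
  ultimately show ?thesis
    using y by simp
qed

lemma orthonormal_vecs_map_mult_mat_vec:
  assumes ws: "orthonormal_vecs n ws" and ys: "orthonormal_vecs (length ws) ys"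
  shows "orthonormal_vecs n (map (\<lambda>y. mat_of_cols n ws *\<^sub>v y) ys)"
proof -
  define W where "W = mat_of_cols n ws"
  have W: "W \<in> carrier_mat n (length ws)"
    by (simp add: W_def)
  have isometry: "(W *\<^sub>v y) \<bullet> (W *\<^sub>v y') = y \<bullet> y'"
    if y: "y \<in> carrier_vec (length ws)" and y': "y' \<in> carrier_vec (length ws)" for y y'
  proof -
    have "(W *\<^sub>v y) \<bullet> (W *\<^sub>v y') = (W\<^sup>T *\<^sub>v (W *\<^sub>v y)) \<bullet> y'"
      using W y y' by (intro transpose_vec_mult_scalar[symmetric]) auto
    then show ?thesis
      using orthonormal_vecs_transpose_mult_mult_vec[OF ws y] by (simp add: W_def)
  qed
  have ys_carrier: "ys ! i \<in> carrier_vec (length ws)" if "i < length ys" for i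
    using ys that nth_mem by (auto simp: orthonormal_vecs_def)
  show ?thesis
    unfolding orthonormal_vecs_def
  proof (intro conjI allI impI)
    show "set (map (\<lambda>y. mat_of_cols n ws *\<^sub>v y) ys) \<subseteq> carrier_vec n"
      using ys by (auto simp: orthonormal_vecs_def intro!: mult_mat_vec_carrier[of _ n "length ws"])
    fix i j assume "i < length (map (\<lambda>y. mat_of_cols n ws *\<^sub>v y) ys)"
      and "j < length (map (\<lambda>y. mat_of_cols n ws *\<^sub>v y) ys)"
    then have i: "i < length ys" and j: "j < length ys" by auto
    show "map (\<lambda>y. mat_of_cols n ws *\<^sub>v y) ys ! i \<bullet> map (\<lambda>y. mat_of_cols n ws *\<^sub>v y) ys ! j =
        (if i = j then 1 else 0)"
      using isometry[OF ys_carrier[OF i] ys_carrier[OF j]] ys i j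
      by (simp add: W_def orthonormal_vecs_def)
  qed
qed

lemma orthonormal_basis_Cons_map_mult_mat_vec:
  assumes basis: "orthonormal_basis n (v # ws)" and ys: "orthonormal_basis (length ws) ys"
  shows "orthonormal_basis n (v # map (\<lambda>y. mat_of_cols n ws *\<^sub>v y) ys)"
proof -
  have ws: "orthonormal_vecs n ws" and v: "v \<in> carrier_vec n" "v \<bullet> v = 1"
    and orth: "\<forall>w\<in>set ws. v \<bullet> w = 0"
    using basis by (auto simp: orthonormal_basis_def orthonormal_vecs_Cons)
  have "v \<bullet> (mat_of_cols n ws *\<^sub>v y) = 0" if "y \<in> set ys" for y
    using scalar_prod_mat_of_cols_mult_vec_eq_0[OF v(1) _ orth] ws ys that
    by (auto simp: orthonormal_vecs_def orthonormal_basis_def)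
  then show ?thesis
    using basis ys v orthonormal_vecs_map_mult_mat_vec[OF ws]
    by (auto simp: orthonormal_basis_def orthonormal_vecs_Cons)
qed

section \<open>The spectral theorem for real symmetric matrices\<close>

lemma eigenvalue_real_symmetric_mat_real:
  fixes A :: "real mat"
  assumes A: "A \<in> carrier_mat n n" and sym: "A\<^sup>T = A"
    and ev: "eigenvalue (map_mat complex_of_real A) a"
  shows "a \<in> \<real>"
proof -
  define Ac where "Ac = map_mat complex_of_real A"
  have Ac: "Ac \<in> carrier_mat n n" and Ac_sym: "Ac\<^sup>T = Ac"
    using A sym by (auto simp: Ac_def map_mat_transpose)
  obtain z where z: "z \<in> carrier_vec n" "z \<noteq> 0\<^sub>v n" and eq: "Ac *\<^sub>v z = a \<cdot>\<^sub>v z"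
    using ev Ac unfolding eigenvalue_def eigenvector_def Ac_def by auto
  have conj_Az: "conjugate (Ac *\<^sub>v z) = Ac *\<^sub>v conjugate z"
  proof (rule eq_vecI)
    fix i assume "i < dim_vec (Ac *\<^sub>v conjugate z)"
    then have i: "i < n" using Ac by simp
    have "conjugate (Ac *\<^sub>v z) $ i = conjugate (row Ac i \<bullet> z)"
      using Ac i by (simp del: conjugate_complex_def)
    also have "\<dots> = conjugate (row Ac i) \<bullet> conjugate z"
      using Ac i z by (intro conjugate_sprod_vec) auto
    also have "conjugate (row Ac i) = row Ac i"
      using A i by (auto simp: Ac_def)
    finally show "conjugate (Ac *\<^sub>v z) $ i = (Ac *\<^sub>v conjugate z) $ i"
      using Ac i by simp
  qed (use Ac in simp)
  have "a * (z \<bullet>c z) = (Ac *\<^sub>v z) \<bullet>c z"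
    using z by (simp add: eq)
  also have "\<dots> = z \<bullet> (Ac *\<^sub>v conjugate z)"
    using transpose_vec_mult_scalar[OF Ac, of "conjugate z" z] z by (simp add: Ac_sym)
  also have "\<dots> = cnj a * (z \<bullet>c z)"
    using z by (simp add: conj_Az[symmetric] eq conjugate_smult_vec)
  finally have "a = cnj a"
    using z by simp
  then show ?thesis
    using Reals_cnj_iff by metis
qed

lemma real_symmetric_mat_unit_eigenvector:
  fixes A :: "real mat"
  assumes A: "A \<in> carrier_mat n n" and sym: "A\<^sup>T = A" and n: "0 < n"
  obtains l v where "v \<in> carrier_vec n" "v \<bullet> v = 1" "A *\<^sub>v v = l \<cdot>\<^sub>v v"
proof -
  let ?Ac = "map_mat complex_of_real A"
  have Ac: "?Ac \<in> carrier_mat n n" using A by simp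
  obtain as where "char_poly ?Ac = (\<Prod>a\<leftarrow>as. [:- a, 1:])" and "length as = n"
    using char_poly_factorized[OF Ac] by blast
  with n obtain a where root: "poly (char_poly ?Ac) a = 0"
    by (cases as) auto
  then have "a \<in> \<real>"
    using eigenvalue_real_symmetric_mat_real[OF A sym] eigenvalue_root_char_poly[OF Ac] by simp
  then obtain r where "a = of_real r"
    by (auto elim: Reals_cases)
  then have "of_real (poly (char_poly A) r) = poly (char_poly ?Ac) a"
    by (simp add: of_real_hom.char_poly_hom[OF A])
  then have "poly (char_poly A) r = 0"
    using root by simp
  then have "eigenvalue A r"
    using eigenvalue_root_char_poly[OF A] by simp
  then obtain v0 where v0: "v0 \<in> carrier_vec n" "v0 \<noteq> 0\<^sub>v n" "A *\<^sub>v v0 = r \<cdot>\<^sub>v v0"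
    using A unfolding eigenvalue_def eigenvector_def by auto
  have "v0 \<bullet> v0 \<noteq> 0"
    using v0 conjugate_square_eq_0_vec[of v0 n] by simp
  then have pos: "v0 \<bullet> v0 > 0"
    using real_scalar_prod_self_nonneg[of v0] by linarith
  define v where "v = (1 / sqrt (v0 \<bullet> v0)) \<cdot>\<^sub>v v0"
  show thesis
  proof
    show "v \<in> carrier_vec n" using v0 by (simp add: v_def)
    show "v \<bullet> v = 1" using v0 pos by (simp add: v_def)
    show "A *\<^sub>v v = r \<cdot>\<^sub>v v"
      using v0 A by (simp add: v_def mult_mat_vec smult_smult_assoc mult.commute)
  qed
qed

lemma transpose_congruence_symmetric:
  fixes A :: "'a :: comm_semiring_0 mat"
  assumes W: "W \<in> carrier_mat n m" and A: "A \<in> carrier_mat n n" and sym: "A\<^sup>T = A"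
  shows "(W\<^sup>T * A * W)\<^sup>T = W\<^sup>T * A * W"
  using W A sym transpose_mult[of "W\<^sup>T * A" m n W m] transpose_mult[of "W\<^sup>T" m n A n]
  by (simp add: assoc_mult_mat[of "W\<^sup>T" m n A n W m])

lemma eigenvector_of_compression:
  fixes A :: "real mat"
  assumes basis: "orthonormal_basis n (v # ws)" and A: "A \<in> carrier_mat n n" and sym: "A\<^sup>T = A"
    and Av: "A *\<^sub>v v = l \<cdot>\<^sub>v v" and y: "y \<in> carrier_vec (length ws)"
    and By: "((mat_of_cols n ws)\<^sup>T * A * mat_of_cols n ws) *\<^sub>v y = \<nu> \<cdot>\<^sub>v y"
  shows "A *\<^sub>v (mat_of_cols n ws *\<^sub>v y) = \<nu> \<cdot>\<^sub>v (mat_of_cols n ws *\<^sub>v y)"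
proof -
  define W where "W = mat_of_cols n ws"
  define x where "x = W *\<^sub>v y"
  have ws: "orthonormal_vecs n ws" and v: "v \<in> carrier_vec n" and orth: "\<forall>w\<in>set ws. v \<bullet> w = 0"
    using basis by (auto simp: orthonormal_basis_def orthonormal_vecs_Cons)
  then have ws_carrier: "set ws \<subseteq> carrier_vec n"
    by (simp add: orthonormal_vecs_def)
  have W: "W \<in> carrier_mat n (length ws)"
    by (simp add: W_def)
  have x: "x \<in> carrier_vec n"
    using W y by (simp add: x_def)
  have vx: "v \<bullet> x = 0"
    unfolding x_def W_def using scalar_prod_mat_of_cols_mult_vec_eq_0[OF v ws_carrier orth y] .
  have WTx: "W\<^sup>T *\<^sub>v x = y"
    unfolding x_def W_def by (rule orthonormal_vecs_transpose_mult_mult_vec[OF ws y])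
  have "W\<^sup>T *\<^sub>v (A *\<^sub>v x) = (W\<^sup>T * A * W) *\<^sub>v y"
    using assoc_mult_mat_vec[of "W\<^sup>T * A" "length ws" n W "length ws" y]
      assoc_mult_mat_vec[of "W\<^sup>T" "length ws" n A n "W *\<^sub>v y"] A W y
    by (simp add: x_def)
  with By have WTAx: "W\<^sup>T *\<^sub>v (A *\<^sub>v x) = \<nu> \<cdot>\<^sub>v y"
    by (simp add: W_def)
  have "(v # ws) ! j \<bullet> (A *\<^sub>v x) = (v # ws) ! j \<bullet> (\<nu> \<cdot>\<^sub>v x)" if j: "j < n" for j
  proof (cases j)
    case 0
    have "v \<bullet> (A *\<^sub>v x) = (A\<^sup>T *\<^sub>v v) \<bullet> x"
      using A v x by (intro transpose_vec_mult_scalar[symmetric]) auto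
    then show ?thesis
      using 0 sym Av v x vx by simp
  next
    case (Suc a)
    then have a: "a < length ws"
      using basis j by (simp add: orthonormal_basis_def)
    have "ws ! a \<bullet> (A *\<^sub>v x) = (W\<^sup>T *\<^sub>v (A *\<^sub>v x)) $ a"
      unfolding W_def using index_transpose_mat_of_cols_mult_vec[OF ws_carrier a] by simp
    also have "\<dots> = \<nu> * (W\<^sup>T *\<^sub>v x) $ a"
      using WTAx WTx a y by simp
    also have "\<dots> = ws ! a \<bullet> (\<nu> \<cdot>\<^sub>v x)"
      unfolding W_def using index_transpose_mat_of_cols_mult_vec[OF ws_carrier a] x nth_mem[OF a] ws_carrier
      by auto
    finally show ?thesis
      using Suc by simp
  qed
  then show ?thesis
    using orthonormal_basis_coordinates_eq[OF basis] A x unfolding x_def W_def by simp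
qed

theorem real_symmetric_mat_orthonormal_eigenbasis:
  fixes A :: "real mat"
  assumes "A \<in> carrier_mat n n" "A\<^sup>T = A"
  shows "\<exists>us \<mu>. orthonormal_basis n us \<and> (\<forall>i<n. A *\<^sub>v us ! i = \<mu> i \<cdot>\<^sub>v us ! i)"
  using assms
proof (induction n arbitrary: A)
  case 0
  then show ?case
    by (auto simp: orthonormal_basis_def orthonormal_vecs_def)
next
  case (Suc m)
  obtain l v where v: "v \<in> carrier_vec (Suc m)" "v \<bullet> v = 1" and Av: "A *\<^sub>v v = l \<cdot>\<^sub>v v"
    using real_symmetric_mat_unit_eigenvector[OF Suc.prems] by blast
  obtain ws where basis: "orthonormal_basis (Suc m) (v # ws)"
    using orthonormal_basis_extension[OF v] by blast
  then have len: "length ws = m"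
    by (simp add: orthonormal_basis_def)
  define W where "W = mat_of_cols (Suc m) ws"
  have W: "W \<in> carrier_mat (Suc m) m"
    using mat_of_cols_carrier(1)[of "Suc m" ws] len by (simp add: W_def)
  have B: "W\<^sup>T * A * W \<in> carrier_mat m m"
    using W Suc.prems(1) by simp
  obtain ys \<nu> where ys: "orthonormal_basis m ys" and eig: "\<forall>i<m. (W\<^sup>T * A * W) *\<^sub>v ys ! i = \<nu> i \<cdot>\<^sub>v ys ! i"
    using Suc.IH[OF B transpose_congruence_symmetric[OF W Suc.prems]] by blast
  have ys_carrier: "ys ! i \<in> carrier_vec m" if "i < m" for i
    using ys that nth_mem by (auto simp: orthonormal_basis_def orthonormal_vecs_def)
  define us where "us = v # map (\<lambda>y. W *\<^sub>v y) ys"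
  have "orthonormal_basis (Suc m) us"
    using orthonormal_basis_Cons_map_mult_mat_vec[OF basis] ys len by (simp add: us_def W_def)
  moreover have "A *\<^sub>v us ! i = case_nat l \<nu> i \<cdot>\<^sub>v us ! i" if "i < Suc m" for i
  proof (cases i)
    case 0
    then show ?thesis
      using Av by (simp add: us_def)
  next
    case (Suc c)
    then have c: "c < m"
      using that by simp
    have "A *\<^sub>v (W *\<^sub>v ys ! c) = \<nu> c \<cdot>\<^sub>v (W *\<^sub>v ys ! c)"
      using eigenvector_of_compression[OF basis Suc.prems Av, of "ys ! c" "\<nu> c"] ys_carrier[OF c] eig c len
      by (simp add: W_def)
    then show ?thesis
      using Suc c ys by (simp add: us_def orthonormal_basis_def)
  qed
  ultimately show ?case
    by blast
qed

lemma char_poly_orthonormal_eigenbasis: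
  fixes A :: "real mat"
  assumes A: "A \<in> carrier_mat n n" and us: "orthonormal_basis n us"
    and eig: "\<forall>i<n. A *\<^sub>v us ! i = \<mu> i \<cdot>\<^sub>v us ! i"
  shows "char_poly A = (\<Prod>a\<leftarrow>map \<mu> [0..<n]. [:- a, 1:])"
proof -
  define U where "U = mat_of_cols n us"
  define D where "D = mat_diag n \<mu>"
  have U: "U \<in> carrier_mat n n" and UUT: "U * U\<^sup>T = 1\<^sub>m n"
    using orthonormal_basis_mat_of_cols[OF us] by (simp_all add: U_def)
  have UTU: "U\<^sup>T * U = 1\<^sub>m n"
    using orthonormal_vecs_mat_of_cols[of n us] us by (simp add: U_def orthonormal_basis_def)
  have D: "D \<in> carrier_mat n n"
    by (simp add: D_def)
  have AU: "A * U = U * D"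
  proof (rule eq_matI)
    fix r j assume "r < dim_row (U * D)" "j < dim_col (U * D)"
    then have r: "r < n" and j: "j < n"
      using U D by auto
    have uj: "us ! j \<in> carrier_vec n" "j < length us"
      using us j nth_mem[of j us] by (auto simp: orthonormal_basis_def orthonormal_vecs_def)
    have "row A r \<bullet> us ! j = (A *\<^sub>v us ! j) $ r"
      using A r by simp
    also have "\<dots> = \<mu> j * us ! j $ r"
      using eig j r uj by simp
    finally show "(A * U) $$ (r, j) = (U * D) $$ (r, j)"
      using A U r j uj mat_diag_mult_right[OF U, of \<mu>]
      by (simp add: U_def D_def mat_of_cols_index mult.commute)
  qed (use A U D in auto)
  have "A = A * (U * U\<^sup>T)"
    using A UUT by simp
  also have "\<dots> = U * D * U\<^sup>T"
    using A U AU by (simp add: assoc_mult_mat[of A n n U n "U\<^sup>T" n, symmetric])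
  finally have "similar_mat_wit A D U U\<^sup>T"
    unfolding similar_mat_wit_def Let_def using A U D UTU UUT by auto
  then have "char_poly A = char_poly D"
    by (intro char_poly_similar) (auto simp: similar_mat_def)
  also have "\<dots> = (\<Prod>a\<leftarrow>diag_mat D. [:- a, 1:])"
    by (rule char_poly_upper_triangular[OF D]) (auto simp: upper_triangular_def D_def mat_diag_def)
  also have "diag_mat D = map \<mu> [0..<n]"
    by (auto simp: diag_mat_def D_def mat_diag_def)
  finally show ?thesis .
qed

lemma order_prod_linear_factors:
  "Polynomial.order x (\<Prod>a\<leftarrow>xs. [:- a, 1:]) = count (mset xs) (x :: real)"
proof (induction xs)
  case Nil
  then show ?case
    by (simp add: order_0I)
next
  case (Cons a xs)
  have "(\<Prod>a\<leftarrow>xs. [:- a, 1:]) \<noteq> (0 :: real poly)"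
    by auto
  then have "[:- a, 1:] * (\<Prod>a\<leftarrow>xs. [:- a, 1:]) \<noteq> 0"
    by (intro no_zero_divisors) simp_all
  then have "Polynomial.order x ([:- a, 1:] * (\<Prod>a\<leftarrow>xs. [:- a, 1:])) =
      Polynomial.order x [:- a, 1:] + Polynomial.order x (\<Prod>a\<leftarrow>xs. [:- a, 1:])"
    by (rule order_mult)
  moreover have "Polynomial.order x [:- a, 1:] = (if x = a then 1 else 0)"
    using order_power_n_n[of a 1] by (auto intro: order_0I)
  ultimately show ?case
    using Cons by simp
qed

lemma real_roots_mset_prod_linear_factors:
  "real_roots_mset (\<Prod>a\<leftarrow>xs. [:- a, 1:]) = mset xs"
proof (rule multiset_eqI)
  fix x :: real
  define p where "p = (\<Prod>a\<leftarrow>xs. [:- a, 1:])"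
  have p: "p \<noteq> 0"
    by (auto simp: p_def)
  have "count (real_roots_mset p) x = (\<Sum>y\<in>{x. poly p x = 0}. if x = y then Polynomial.order y p else 0)"
    unfolding real_roots_mset_def by (simp add: count_sum)
  also have "\<dots> = (if poly p x = 0 then Polynomial.order x p else 0)"
    using poly_roots_finite[OF p] by simp
  also have "\<dots> = Polynomial.order x p"
    using order_root[of p x] p by auto
  finally show "count (real_roots_mset (\<Prod>a\<leftarrow>xs. [:- a, 1:])) x = count (mset xs) x"
    using order_prod_linear_factors unfolding p_def by simp
qed

lemma Sk_eq_sum_over_subset:
  fixes A :: "real mat"
  assumes cp: "char_poly A = (\<Prod>a\<leftarrow>map \<mu> [0..<n]. [:- a, 1:])" and k: "k \<le> n"
  obtains I where "I \<subseteq> {..<n}" "card I = k" "Sk k A = (\<Sum>i\<in>I. \<mu> i)"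
proof -
  define xs where "xs = map \<mu> [0..<n]"
  have ev: "eigenvalues_desc A = rev (sort xs)"
    unfolding eigenvalues_desc_def cp xs_def[symmetric] real_roots_mset_prod_linear_factors by simp
  have len: "length (rev (sort xs)) = n" "length xs = n"
    by (auto simp: xs_def)
  obtain f where f: "bij_betw f {..<n} {..<n}" and fe: "\<forall>i<n. rev (sort xs) ! i = xs ! f i"
    using permutation_Ex_bij[of "rev (sort xs)" xs] len by auto
  have inj: "inj_on f {..<k}"
    using f k by (meson bij_betw_imp_inj_on inj_on_subset lessThan_subset_iff)
  have sub: "f ` {..<k} \<subseteq> {..<n}"
    using f k by (auto simp: bij_betw_def)
  have "Sk k A = (\<Sum>i<k. \<mu> (f i))"
    unfolding Sk_def ev using fe k sub by (intro sum.cong) (auto simp: xs_def)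
  also have "\<dots> = (\<Sum>i\<in>f ` {..<k}. \<mu> i)"
    by (simp add: sum.reindex[OF inj])
  finally show thesis
    using that sub card_image[OF inj] by simp
qed

section \<open>Bounding the sum of the largest eigenvalues\<close>

lemma quadratic_form_shift:
  fixes M :: "real mat"
  assumes M: "M \<in> carrier_mat n n" and u: "u \<in> carrier_vec n"
  shows "u \<bullet> (M *\<^sub>v u) =
    c * (u \<bullet> vec n (\<lambda>_. 1))\<^sup>2 + u \<bullet> (mat n n (\<lambda>(r, s). M $$ (r, s) - c) *\<^sub>v u)"
proof -
  define N where "N = mat n n (\<lambda>(r, s). M $$ (r, s) - c)"
  define S where "S = (\<Sum>s<n. u $ s)"
  have N: "N \<in> carrier_mat n n"
    by (simp add: N_def)
  have row: "(M *\<^sub>v u) $ r = c * S + (N *\<^sub>v u) $ r" if r: "r < n" for r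
  proof -
    have "(M *\<^sub>v u) $ r = (\<Sum>s<n. c * u $ s + N $$ (r, s) * u $ s)"
      using index_mult_mat_vec_sum[OF M u r] r by (simp add: N_def algebra_simps)
    also have "\<dots> = c * S + (N *\<^sub>v u) $ r"
      using index_mult_mat_vec_sum[OF N u r] by (simp add: S_def sum.distrib sum_distrib_left)
    finally show ?thesis .
  qed
  have "u \<bullet> (M *\<^sub>v u) = (\<Sum>r<n. u $ r * (c * S + (N *\<^sub>v u) $ r))"
    using M u row by (simp add: scalar_prod_sum[of _ n])
  also have "\<dots> = c * S * S + u \<bullet> (N *\<^sub>v u)"
    using N u by (simp add: scalar_prod_sum[of _ n] S_def algebra_simps sum.distrib sum_distrib_left)
  also have "S = u \<bullet> vec n (\<lambda>_. 1)"
    using u by (simp add: S_def scalar_prod_sum[of _ n])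
  finally show ?thesis
    by (simp add: N_def power2_eq_square)
qed

lemma sum_sq_norm_mult_mat_vec_orthonormal_basis:
  fixes N :: "real mat"
  assumes us: "orthonormal_basis n us" and N: "N \<in> carrier_mat m n"
  shows "(\<Sum>i<n. (N *\<^sub>v us ! i) \<bullet> (N *\<^sub>v us ! i)) = (\<Sum>r<m. row N r \<bullet> row N r)"
proof -
  have u: "us ! i \<in> carrier_vec n" if "i < n" for i
    using us that nth_mem by (auto simp: orthonormal_basis_def orthonormal_vecs_def)
  have "(\<Sum>i<n. (N *\<^sub>v us ! i) \<bullet> (N *\<^sub>v us ! i)) = (\<Sum>i<n. \<Sum>r<m. (us ! i \<bullet> row N r)\<^sup>2)"
  proof (intro sum.cong refl)
    fix i assume "i \<in> {..<n}"
    then have i: "i < n" by simp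
    have "(N *\<^sub>v us ! i) \<bullet> (N *\<^sub>v us ! i) = (\<Sum>r<m. (row N r \<bullet> us ! i)\<^sup>2)"
      using N u[OF i] by (simp add: scalar_prod_sum[of _ m] power2_eq_square)
    also have "\<dots> = (\<Sum>r<m. (us ! i \<bullet> row N r)\<^sup>2)"
      using N u[OF i] by (intro sum.cong refl) (simp add: comm_scalar_prod[of _ n])
    finally show "(N *\<^sub>v us ! i) \<bullet> (N *\<^sub>v us ! i) = (\<Sum>r<m. (us ! i \<bullet> row N r)\<^sup>2)" .
  qed
  also have "\<dots> = (\<Sum>r<m. \<Sum>i<n. (us ! i \<bullet> row N r)\<^sup>2)"
    by (rule sum.swap)
  also have "\<dots> = (\<Sum>r<m. row N r \<bullet> row N r)"
    using N by (intro sum.cong refl orthonormal_basis_parseval[OF us]) auto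
  finally show ?thesis .
qed

lemma sum_sq_norm_mult_mat_vec_orthonormal_basis_le:
  fixes N :: "real mat"
  assumes us: "orthonormal_basis n us" and N: "N \<in> carrier_mat m n"
    and bound: "\<And>r s. r < m \<Longrightarrow> s < n \<Longrightarrow> \<bar>N $$ (r, s)\<bar> \<le> c"
  shows "(\<Sum>i<n. (N *\<^sub>v us ! i) \<bullet> (N *\<^sub>v us ! i)) \<le> m * n * c\<^sup>2"
proof -
  have "row N r \<bullet> row N r \<le> n * c\<^sup>2" if r: "r < m" for r
  proof -
    have "row N r \<bullet> row N r = (\<Sum>s<n. (N $$ (r, s))\<^sup>2)"
      using N r by (simp add: scalar_prod_sum[of _ n] power2_eq_square)
    also have "\<dots> \<le> (\<Sum>s<n. c\<^sup>2)"
    proof (rule sum_mono)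
      fix s assume "s \<in> {..<n}"
      then have entry: "\<bar>N $$ (r, s)\<bar> \<le> c"
        using bound r by simp
      then have "0 \<le> c"
        by (rule order_trans[OF abs_ge_zero])
      with entry show "(N $$ (r, s))\<^sup>2 \<le> c\<^sup>2"
        by (simp add: power2_le_iff_abs_le)
    qed
    finally show ?thesis
      by simp
  qed
  then have "(\<Sum>r<m. row N r \<bullet> row N r) \<le> (\<Sum>r<m. n * c\<^sup>2)"
    by (intro sum_mono) auto
  then show ?thesis
    using sum_sq_norm_mult_mat_vec_orthonormal_basis[OF us N] by (simp add: mult.assoc)
qed

lemma sum_quadratic_forms_orthonormal_basis_le:
  fixes N :: "real mat"
  assumes us: "orthonormal_basis n us" and N: "N \<in> carrier_mat n n" and c: "0 \<le> c"
    and bound: "\<And>r s. r < n \<Longrightarrow> s < n \<Longrightarrow> \<bar>N $$ (r, s)\<bar> \<le> c" and I: "I \<subseteq> {..<n}"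
  shows "(\<Sum>i\<in>I. us ! i \<bullet> (N *\<^sub>v us ! i)) \<le> sqrt (card I) * (n * c)"
proof -
  define q where "q i = us ! i \<bullet> (N *\<^sub>v us ! i)" for i
  have q_sq: "(q i)\<^sup>2 \<le> (N *\<^sub>v us ! i) \<bullet> (N *\<^sub>v us ! i)" if i: "i < n" for i
  proof -
    have "us ! i \<in> carrier_vec n" "us ! i \<bullet> us ! i = 1"
      using us i nth_mem by (auto simp: orthonormal_basis_def orthonormal_vecs_def)
    then show ?thesis
      using real_scalar_prod_square_le[of "us ! i" n "N *\<^sub>v us ! i"] N by (simp add: q_def)
  qed
  have "(\<Sum>i\<in>I. (q i)\<^sup>2) \<le> (\<Sum>i<n. (N *\<^sub>v us ! i) \<bullet> (N *\<^sub>v us ! i))"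
    using I q_sq real_scalar_prod_self_nonneg
    by (intro order_trans[OF sum_mono sum_mono2[of "{..<n}"]]) auto
  also have "\<dots> \<le> real n * real n * c\<^sup>2"
    by (rule sum_sq_norm_mult_mat_vec_orthonormal_basis_le[OF us N bound])
  also have "\<dots> = (n * c)\<^sup>2"
    by (simp add: power_mult_distrib power2_eq_square)
  finally have "sqrt (\<Sum>i\<in>I. (q i)\<^sup>2) \<le> n * c"
    by (intro real_le_lsqrt) (use c in auto)
  then have "sqrt (card I) * sqrt (\<Sum>i\<in>I. (q i)\<^sup>2) \<le> sqrt (card I) * (n * c)"
    by (intro mult_left_mono) auto
  then show ?thesis
    using sum_le_sqrt_card_mult_sqrt_sum_squares[of q I] by (simp add: q_def)
qed

lemma sum_eigenvalues_le:
  fixes M :: "real mat"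
  assumes M: "M \<in> carrier_mat n n" and us: "orthonormal_basis n us"
    and eig: "\<forall>i<n. M *\<^sub>v us ! i = \<mu> i \<cdot>\<^sub>v us ! i" and c: "0 \<le> c"
    and entries: "\<And>r s. r < n \<Longrightarrow> s < n \<Longrightarrow> 0 \<le> M $$ (r, s) \<and> M $$ (r, s) \<le> 2 * c"
    and I: "I \<subseteq> {..<n}"
  shows "(\<Sum>i\<in>I. \<mu> i) \<le> c * n * (1 + sqrt (card I))"
proof -
  define one :: "real vec" where "one = vec n (\<lambda>_. 1)"
  define N where "N = mat n n (\<lambda>(r, s). M $$ (r, s) - c)"
  have N: "N \<in> carrier_mat n n"
    by (simp add: N_def)
  have \<mu>: "\<mu> i = c * (us ! i \<bullet> one)\<^sup>2 + us ! i \<bullet> (N *\<^sub>v us ! i)" if i: "i < n" for i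
  proof -
    have u: "us ! i \<in> carrier_vec n" "us ! i \<bullet> us ! i = 1"
      using us i nth_mem by (auto simp: orthonormal_basis_def orthonormal_vecs_def)
    then have "\<mu> i = us ! i \<bullet> (M *\<^sub>v us ! i)"
      using eig i by simp
    then show ?thesis
      using quadratic_form_shift[OF M u(1)] by (simp add: one_def N_def)
  qed
  have ones: "(\<Sum>i\<in>I. (us ! i \<bullet> one)\<^sup>2) \<le> n"
    using orthonormal_basis_bessel[OF us _ I, of one] by (simp add: one_def scalar_prod_def)
  have "\<bar>N $$ (r, s)\<bar> \<le> c" if "r < n" "s < n" for r s
    using entries[OF that] that by (simp add: N_def abs_le_iff)
  from sum_quadratic_forms_orthonormal_basis_le[OF us N c this I]
  have "(\<Sum>i\<in>I. \<mu> i) \<le> c * (\<Sum>i\<in>I. (us ! i \<bullet> one)\<^sup>2) + sqrt (card I) * (n * c)"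
    using I \<mu> by (simp add: sum.distrib sum_distrib_left subset_eq)
  also have "\<dots> \<le> c * n + sqrt (card I) * (n * c)"
    using ones c by (intro add_mono mult_left_mono) auto
  finally show ?thesis
    by (simp add: algebra_simps)
qed

theorem Sk_le_of_entries_between:
  fixes M :: "real mat"
  assumes M: "M \<in> carrier_mat n n" and sym: "M\<^sup>T = M" and c: "0 \<le> c"
    and entries: "\<And>r s. r < n \<Longrightarrow> s < n \<Longrightarrow> 0 \<le> M $$ (r, s) \<and> M $$ (r, s) \<le> 2 * c"
    and k: "k \<le> n"
  shows "Sk k M \<le> c * n * (1 + sqrt k)"
proof -
  obtain us \<mu> where us: "orthonormal_basis n us" and eig: "\<forall>i<n. M *\<^sub>v us ! i = \<mu> i \<cdot>\<^sub>v us ! i"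
    using real_symmetric_mat_orthonormal_eigenbasis[OF M sym] by blast
  obtain I where I: "I \<subseteq> {..<n}" "card I = k" "Sk k M = (\<Sum>i\<in>I. \<mu> i)"
    using Sk_eq_sum_over_subset[OF char_poly_orthonormal_eigenbasis[OF M us eig] k] .
  then show ?thesis
    using sum_eigenvalues_le[OF M us eig c entries I(1)] by simp
qed

lemma A_alpha_carrier: "A_alpha \<alpha> n E \<in> carrier_mat n n"
  by (simp add: A_alpha_def deg_matrix_def adj_matrix_def)

lemma index_A_alpha:
  assumes "i < n" "j < n"
  shows "A_alpha \<alpha> n E $$ (i, j) =
    \<alpha> * (if i = j then real (degree n E i) else 0) + (1 - \<alpha>) * (if E i j then 1 else 0)"
  using assms by (simp add: A_alpha_def deg_matrix_def adj_matrix_def)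

lemma A_alpha_symmetric:
  assumes "simple_graph n E"
  shows "(A_alpha \<alpha> n E)\<^sup>T = A_alpha \<alpha> n E"
  using assms A_alpha_carrier[of \<alpha> n E]
  by (intro eq_matI) (auto simp: index_A_alpha simple_graph_def)

lemma A_alpha_entries_between:
  assumes G: "simple_graph n E" and \<alpha>: "0 \<le> \<alpha>" "\<alpha> \<le> 1" and ij: "i < n" "j < n"
  shows "0 \<le> A_alpha \<alpha> n E $$ (i, j) \<and>
    A_alpha \<alpha> n E $$ (i, j) \<le> max (\<alpha> * max_degree n E) (1 - \<alpha>)"
proof -
  have "degree n E i \<le> max_degree n E"
    using ij unfolding max_degree_def by (intro Max_ge) auto
  then have "\<alpha> * degree n E i \<le> \<alpha> * max_degree n E"
    using \<alpha> by (intro mult_left_mono) auto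
  moreover have "\<not> E i i"
    using G by (simp add: simple_graph_def)
  ultimately show ?thesis
    using \<alpha> ij by (auto simp: index_A_alpha)
qed

lemma Sk_A_alpha_le:
  assumes G: "simple_graph n E" and \<alpha>: "0 \<le> \<alpha>" "\<alpha> \<le> 1" and k: "k \<le> n"
  shows "Sk k (A_alpha \<alpha> n E) \<le> max (\<alpha> * max_degree n E) (1 - \<alpha>) / 2 * n * (1 + sqrt k)"
  using A_alpha_entries_between[OF G \<alpha>] \<alpha> k
  by (intro Sk_le_of_entries_between[OF A_alpha_carrier A_alpha_symmetric[OF G]]) auto

theorem theorem3p1:
  fixes n :: nat and E :: "nat \<Rightarrow> nat \<Rightarrow> bool" and \<alpha> :: real
  assumes "simple_graph n E"
    and "\<not> is_complete_graph n E"
  shows "(0 \<le> \<alpha> \<and> \<alpha> < 1 / (real (max_degree n E) + 1) \<longrightarrow>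
           (\<forall>k. 2 \<le> k \<and> k \<le> n \<longrightarrow>
              Sk k (A_alpha \<alpha> n E) \<le> (1 - \<alpha>) * real n / 2 * (1 + sqrt (real k))))
       \<and> (1 / (real (max_degree n E) + 1) \<le> \<alpha> \<and> \<alpha> < 1 \<longrightarrow>
           (\<forall>k. 2 \<le> k \<and> k \<le> n \<longrightarrow>
              Sk k (A_alpha \<alpha> n E) \<le> \<alpha> * real (max_degree n E) * real n / 2 * (1 + sqrt (real k))))"
proof -
  define \<Delta> where "\<Delta> = real (max_degree n E)"
  have \<Delta>: "0 \<le> \<Delta>"
    by (simp add: \<Delta>_def)
  show ?thesis
  proof (intro conjI impI allI)
    fix k assume \<alpha>: "0 \<le> \<alpha> \<and> \<alpha> < 1 / (real (max_degree n E) + 1)" and k: "2 \<le> k \<and> k \<le> n"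
    then have "\<alpha> * \<Delta> < 1 - \<alpha>" "0 \<le> \<alpha> * \<Delta>"
      using \<Delta> by (simp_all add: \<Delta>_def field_simps)
    then have "\<alpha> \<le> 1" "max (\<alpha> * \<Delta>) (1 - \<alpha>) = 1 - \<alpha>"
      by auto
    then show "Sk k (A_alpha \<alpha> n E) \<le> (1 - \<alpha>) * real n / 2 * (1 + sqrt (real k))"
      using Sk_A_alpha_le[OF assms(1), of \<alpha> k] \<alpha> k by (simp add: \<Delta>_def)
  next
    fix k assume \<alpha>: "1 / (real (max_degree n E) + 1) \<le> \<alpha> \<and> \<alpha> < 1" and k: "2 \<le> k \<and> k \<le> n"
    then have "1 - \<alpha> \<le> \<alpha> * \<Delta>" "0 \<le> \<alpha>"
      using \<Delta> order.trans[of 0 "1 / (\<Delta> + 1)" \<alpha>] by (simp_all add: \<Delta>_def field_simps)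
    then have "max (\<alpha> * \<Delta>) (1 - \<alpha>) = \<alpha> * \<Delta>"
      by simp
    then show "Sk k (A_alpha \<alpha> n E) \<le> \<alpha> * real (max_degree n E) * real n / 2 * (1 + sqrt (real k))"
      using Sk_A_alpha_le[OF assms(1) \<open>0 \<le> \<alpha>\<close>, of k] \<alpha> k by (simp add: \<Delta>_def)
  qed
qed

end
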